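(* Let $p_1,p_2$ be distinct primes with $p_1\equiv p_2\equiv 1\pmod 4$ and let $\varepsilon_2=x+y\sqrt{p_1p_2}$ (with $x,y$ integers or half-integers) be the fundamental unit of $\mathbb{Q}(\sqrt{p_1p_2})$. If $\varepsilon_2$ has norm $1$, then neither $x+1$ nor $x-1$ is a square in $\mathbb{N}$. *)

theory Defs
  imports Complex_Main "HOL-Computational_Algebra.Primes"
begin

text \<open>For a squarefree d with d = 1 (mod 4), the ring of integers of Q(sqrt d) consists of the
numbers (a + b sqrt d)/2 with a, b integers of the same parity.\<close>

definition qf_value :: "int \<Rightarrow> int \<Rightarrow> int \<Rightarrow> real" where
  "qf_value d a b = (real_of_int a + real_of_int b * sqrt (real_of_int d)) / 2"

definition qf_integral :: "int \<Rightarrow> int \<Rightarrow> bool" where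
  "qf_integral a b \<longleftrightarrow> a mod 2 = b mod 2"

definition qf_norm :: "int \<Rightarrow> int \<Rightarrow> int \<Rightarrow> rat" where
  "qf_norm d a b = of_int (a^2 - d * b^2) / 4"

definition qf_unit :: "int \<Rightarrow> int \<Rightarrow> int \<Rightarrow> bool" where
  "qf_unit d a b \<longleftrightarrow> qf_integral a b \<and> (qf_norm d a b = 1 \<or> qf_norm d a b = -1)"

definition fundamental_unit :: "int \<Rightarrow> int \<Rightarrow> int \<Rightarrow> bool" where
  "fundamental_unit d a b \<longleftrightarrow> qf_unit d a b \<and> qf_value d a b > 1 \<and>
     (\<forall>a' b'. qf_unit d a' b' \<and> qf_value d a' b' > 1 \<longrightarrow> qf_value d a b \<le> qf_value d a' b')"

end

theory Submission
  imports Defs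
begin

text \<open>Writing \<open>\<epsilon>\<^sub>2 = (a + b \<surd>d)/2\<close> with \<open>d = p\<^sub>1p\<^sub>2\<close>, norm 1 means \<open>a\<^sup>2 - 4 = d b\<^sup>2\<close>.
If \<open>a/2 \<mp> 1 = n\<^sup>2\<close>, i.e. \<open>a = 2n\<^sup>2 \<plusminus> 2\<close>, then \<open>d (b/2)\<^sup>2 = n\<^sup>2(n\<^sup>2 \<plusminus> 2)\<close>. For odd \<open>n\<close> the right
side is \<open>3\<close> modulo 4, which is not a residue of \<open>d y\<^sup>2\<close> for \<open>d \<equiv> 1\<close>; for even \<open>n\<close> its 2-adic
valuation is odd, whereas that of \<open>d y\<^sup>2\<close> is even. Hence \<open>b = 0\<close>, and then \<open>\<epsilon>\<^sub>2 = \<plusminus>1\<close>, which is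
not greater than 1. Only \<open>d \<equiv> 1 (mod 4)\<close> is used, not primality or fundamentality.\<close>

lemma int_square_mod_4: "(y::int)^2 mod 4 = (if even y then 0 else 1)"
proof (cases "even y")
  case True
  then obtain z where "y = 2 * z" by blast
  then show ?thesis by (simp add: power2_eq_square)
next
  case False
  then obtain z where "y = 2 * z + 1" by (metis oddE)
  then have "y^2 = 1 + (z^2 + z) * 4" by (simp add: power2_eq_square algebra_simps)
  then have "y^2 mod 4 = 1" by (simp only: mod_mult_self1) simp
  then show ?thesis using False by simp
qed

lemma odd_mult_square_eq_twice_square_mult_odd_imp_zero:
  fixes d c y k :: int
  assumes "odd d" "odd c" "d * y^2 = 2 * k^2 * c"
  shows "y = 0"
  using assms(3)
proof (induction "nat \<bar>y\<bar>" arbitrary: y k rule: less_induct)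
  case less
  show ?case
  proof (rule ccontr)
    assume "y \<noteq> 0"
    have "even y" using less.prems \<open>odd d\<close> by (metis dvd_triv_left even_mult_iff even_power)
    then obtain z where z: "y = 2 * z" by blast
    have "2 * (d * z^2) = k^2 * c" using less.prems z by (simp add: power2_eq_square algebra_simps)
    then have "even k" using \<open>odd c\<close> by (metis dvd_triv_left even_mult_iff even_power)
    then obtain j where "k = 2 * j" by blast
    with \<open>2 * (d * z^2) = k^2 * c\<close> have "d * z^2 = 2 * j^2 * c"
      by (simp add: power2_eq_square algebra_simps)
    moreover have "nat \<bar>z\<bar> < nat \<bar>y\<bar>" using z \<open>y \<noteq> 0\<close> by auto
    ultimately have "z = 0" using less.hyps by blast
    then show False using z \<open>y \<noteq> 0\<close> by simp
  qed
qed

lemma mult_square_eq_square_mult_square_plus_2_imp_zero: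
  fixes d y n e :: int
  assumes "d mod 4 = 1" "e mod 4 = 2" "d * y^2 = n^2 * (n^2 + e)"
  shows "y = 0"
proof (cases "even n")
  case True
  then obtain k where "n = 2 * k" by blast
  moreover have "e = 2 * (e div 2)" "odd (e div 2)" using assms(2) by presburger+
  ultimately have "d * y^2 = 2 * n^2 * (2 * k^2 + e div 2)"
    using assms(3) by (simp add: power2_eq_square algebra_simps)
  moreover have "odd (2 * k^2 + e div 2)" using \<open>odd (e div 2)\<close> by simp
  moreover have "odd d" using assms(1) by presburger
  ultimately show ?thesis using odd_mult_square_eq_twice_square_mult_odd_imp_zero by blast
next
  case False
  have "d * y^2 mod 4 = (d mod 4) * (y^2 mod 4) mod 4" by (simp add: mod_mult_eq)
  also have "\<dots> \<noteq> 3" using assms(1) int_square_mod_4[of y] by simp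
  also have "3 = (n^2 mod 4) * ((n^2 mod 4 + e mod 4) mod 4) mod 4"
    using False assms(2) int_square_mod_4[of n] by simp
  also have "\<dots> = n^2 * (n^2 + e) mod 4" by (simp add: mod_mult_eq mod_add_eq)
  finally show ?thesis using assms(3) by simp
qed

lemma qf_norm_eq_1_iff: "qf_norm d a b = 1 \<longleftrightarrow> a^2 - d * b^2 = 4"
proof -
  have "qf_norm d a b = 1 \<longleftrightarrow> (of_int (a^2 - d * b^2) :: rat) = of_int 4"
    unfolding qf_norm_def by auto
  then show ?thesis by (simp only: of_int_eq_iff)
qed

lemma norm_4_value_gt_1_imp_nonzero_coeff:
  assumes "a^2 - d * b^2 = 4" "qf_value d a b > 1"
  shows "b \<noteq> 0"
proof
  assume "b = 0"
  then have "a = 2 \<or> a = -2" using assms(1) power2_eq_iff[of a 2] by simp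
  then show False using assms(2) \<open>b = 0\<close> unfolding qf_value_def by auto
qed

lemma norm_4_trace_neq_twice_square_plus_2:
  fixes d a b :: int
  assumes "d mod 4 = 1" "a^2 - d * b^2 = 4" "b \<noteq> 0" "e = 2 \<or> e = -2"
  shows "a \<noteq> 2 * n^2 + e"
proof
  assume "a = 2 * n^2 + e"
  moreover have "e^2 = 4" using assms(4) by auto
  ultimately have db: "d * b^2 = 4 * (n^2 * (n^2 + e))"
    using assms(2) by (simp add: power2_eq_square algebra_simps)
  then have "even (d * b^2)" by simp
  moreover have "odd d" using assms(1) by presburger
  ultimately have "even b" by simp
  then obtain y where y: "b = 2 * y" by blast
  with db have "d * y^2 = n^2 * (n^2 + e)"
    by (simp add: power2_eq_square algebra_simps)
  moreover have "e mod 4 = 2" using assms(4) by auto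
  ultimately have "y = 0"
    using mult_square_eq_square_mult_square_plus_2_imp_zero[OF assms(1)] by blast
  then show False using y assms(3) by simp
qed

theorem mainTheorem8:
  fixes p1 p2 a b :: int
  assumes "prime p1" and "prime p2" and "p1 \<noteq> p2"
    and "p1 mod 4 = 1" and "p2 mod 4 = 1"
    and "fundamental_unit (p1 * p2) a b"
    and "qf_norm (p1 * p2) a b = 1"
  shows "\<forall>n::nat. real_of_int a / 2 + 1 \<noteq> real n ^ 2 \<and> real_of_int a / 2 - 1 \<noteq> real n ^ 2"
proof (intro allI)
  fix n :: nat
  have d: "p1 * p2 mod 4 = 1" using assms(4,5) mod_mult_eq[of p1 4 p2] by simp
  have norm: "a^2 - p1 * p2 * b^2 = 4" using assms(7) qf_norm_eq_1_iff by blast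
  have "b \<noteq> 0"
    using assms(6) norm norm_4_value_gt_1_imp_nonzero_coeff
    unfolding fundamental_unit_def by blast
  then have a: "a \<noteq> 2 * int n^2 + e" if "e = 2 \<or> e = -2" for e
    using norm_4_trace_neq_twice_square_plus_2 d norm that by blast
  show "real_of_int a / 2 + 1 \<noteq> real n ^ 2 \<and> real_of_int a / 2 - 1 \<noteq> real n ^ 2"
  proof (intro conjI notI)
    assume "real_of_int a / 2 + 1 = real n ^ 2"
    then have "real_of_int a = real_of_int (2 * int n^2 + (-2))" by (simp add: field_simps)
    then show False using a of_int_eq_iff by blast
  next
    assume "real_of_int a / 2 - 1 = real n ^ 2"
    then have "real_of_int a = real_of_int (2 * int n^2 + 2)" by (simp add: field_simps)
    then show False using a of_int_eq_iff by blast
  qed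
qed

end
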